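(* Consider the pay-to-bid game without re-entry with $n\ge 2$ players and fixed $\rho\le 0$, played according to its unique symmetric subgame perfect equilibrium. As $\frac{v-s}{c}\to\infty$ (equivalently, as $\lambda:=\frac{u(c)}{u(v-s)}\to 0^+$): (I) the expected number of rounds of the game tends to infinity; (II) if $n>2$, the probability that the number of active players is reduced to exactly two at some round before the game ends tends to $1$, i.e. $\Pr\{T_{n,2}<T_{n,1}\}\to 1$; (III) if $n>2$, $\frac{\mathbb{E}[T_{n,2}]}{\mathbb{E}[T_{n,1}]}\to 0$, i.e. the expected time until $n-2$ players have exited is negligible relative to the expected length of the auction.
   Context: Pay-to-bid game: an object has monetary value $v>0$ that is common knowledge; there are $n\ge 2$ players; the bid fee is $c>0$ and the fixed sale price is $s\ge 0$, with $c<v-s$. Play proceeds in rounds with complete information. In each round every active player simultaneously chooses an action in $\{\text{Bid},\text{No Bid}\}$. Each Bid costs $c$, paid immediately to the seller. If exactly one active player bids, she wins the object (value $v$), pays $s$, and the game ends; if two or more bid, play continues; if none bids, the round is replayed (a replay is not counted as a new round). Without re-entry, the active players in the next round are exactly those who bid in the current round. Players do not discount; payoff is $u$(final wealth) with $u(x)=\frac{1-e^{-\rho x}}{\rho}$ for a constant $\rho<0$, or $u(x)=x$ when $\rho=0$. In the unique symmetric subgame perfect equilibrium, when $m$ players are active each plays Bid with probability $1-\lambda^{1/(m-1)}$, where $\lambda=u(c)/u(v-s)$. For $1\le m<n$, $T_{n,m}$ denotes the number of rounds, in the game starting with $n$ active players, until the number of active players is at most $m$; in particular $T_{n,1}$ is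 the round in which the game ends, and $T_{n,2}<T_{n,1}$ means that at some round before the end exactly two players are active. *)

theory Defs
  imports "HOL-Analysis.Analysis"
begin

text \<open>Utility function with constant absolute risk aversion parameter rho (u(x)=x for rho=0).\<close>
definition util :: "real \<Rightarrow> real \<Rightarrow> real" where
  "util \<rho> x = (if \<rho> = 0 then x else (1 - exp (- \<rho> * x)) / \<rho>)"

definition lam :: "real \<Rightarrow> real \<Rightarrow> real \<Rightarrow> real \<Rightarrow> real" where
  "lam \<rho> v s c = util \<rho> c / util \<rho> (v - s)"

definition bid_prob :: "real \<Rightarrow> nat \<Rightarrow> real" where
  "bid_prob lm m = 1 - lm powr (1 / (real m - 1))"

text \<open>Probability that, with m active players, the next (counted, i.e. non-replayed) round
  has exactly k bidders: binomial(m,p) conditioned on at least one bidder (replays of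
  rounds with no bidder are not counted).\<close>
definition trans :: "real \<Rightarrow> nat \<Rightarrow> nat \<Rightarrow> real" where
  "trans lm m k = (let p = bid_prob lm m in
     if 1 \<le> k \<and> k \<le> m
     then real (m choose k) * p ^ k * (1 - p) ^ (m - k) / (1 - (1 - p) ^ m)
     else 0)"

text \<open>Probability of the sequence of numbers of active players ks (after rounds 1,2,...),
  starting from m active players.\<close>
fun path_prob :: "real \<Rightarrow> nat \<Rightarrow> nat list \<Rightarrow> real" where
  "path_prob lm m [] = 1"
| "path_prob lm m (k # ks) = trans lm m k * path_prob lm k ks"

text \<open>Complete plays of the game starting with n players and lasting exactly t rounds:
  the list of numbers of active players after each round; the game ends (exactly one
  bidder) at round t.\<close>
definition complete_paths :: "nat \<Rightarrow> nat \<Rightarrow> nat list set" where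
  "complete_paths n t = {xs. length xs = t \<and> 0 < t \<and> set xs \<subseteq> {1..n} \<and>
       last xs = 1 \<and> (\<forall>i < t - 1. 2 \<le> xs ! i)}"

text \<open>T_{n,m} on a play: the first round after which at most m players are active.\<close>
definition hit_time :: "nat \<Rightarrow> nat list \<Rightarrow> nat" where
  "hit_time m xs = Suc (LEAST i. i < length xs \<and> xs ! i \<le> m)"

definition expected_T :: "nat \<Rightarrow> nat \<Rightarrow> real \<Rightarrow> real" where
  "expected_T n m lm =
     (\<Sum>t. \<Sum>xs\<in>complete_paths n t. path_prob lm n xs * real (hit_time m xs))"

definition prob_T2_lt_T1 :: "nat \<Rightarrow> real \<Rightarrow> real" where
  "prob_T2_lt_T1 n lm =
     (\<Sum>t. \<Sum>xs\<in>{xs \<in> complete_paths n t. hit_time 2 xs < hit_time 1 xs}. path_prob lm n xs)"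

definition ratio_to_infinity :: "(real \<times> real \<times> real) filter" where
  "ratio_to_infinity =
     inf (filtercomap (\<lambda>(v, s, c). (v - s) / c) at_top)
         (principal {(v, s, c). 0 < v \<and> 0 < c \<and> 0 \<le> s \<and> c < v - s})"

end

theory Submission
  imports Defs
begin

(*
  With m players active the number of active players in the next
  counted round is distributed according to the kernel  trans \<lambda> m k, which only moves
  downwards (k \<le> m) and ends the game when k = 1.  For the equilibrium bid probability
  1 - q with q = \<lambda>^(1/(m-1)) one has  trans \<lambda> m 1 = m(1-q)\<lambda>/(1-q^m) = O(\<lambda>), whereas the
  probability of leaving state m at all is at least m(1-q)^(m-1) q, of order \<lambda>^(1/(m-1)).

  The central tool
  is a general bound for sub-solutions of the renewal inequality of a downward kernel:
  if X(m, J+1) \<le> a m + \<Sigma>_k P m k X(k, J), then X \<le> (m - lo + 1) \<Sigma>_k a k / (1 - P k k).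
  It yields almost sure termination, E[T_{n,2}] \<le> (n-2) \<Sigma>_{k\<ge>3} 1/(1 - trans k k) and
  Pr{no visit of state 2} \<le> (n-2) \<Sigma>_{k\<ge>3} trans k 1 / (1 - trans k k), while a minimum
  argument on the first-step equation gives E[T_{n,1}] \<ge> 1 / \<Sigma>_k trans k 1.  The last
  section shows that the three bounds force the limits (I)-(III) as \<lambda> \<rightarrow> 0+, using
  trans k 1 / (1 - trans k k) = O(\<lambda>^(1 - 1/(k-1))) for k \<ge> 3, and that \<lambda> \<rightarrow> 0+ as
  (v-s)/c \<rightarrow> \<infinity> by convexity of the utility; theorem4 is then a composition of limits.
*)

section \<open>Plays of the game\<close>

text \<open>The states (numbers of active players) after the non-final rounds of a play of
  length t+1: every such state lies in {2..n}.\<close>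
definition mid_states :: "nat \<Rightarrow> nat \<Rightarrow> nat list set" where
  "mid_states n t = {xs. set xs \<subseteq> {2..n} \<and> length xs = t}"

lemma mid_states_0: "mid_states n 0 = {[]}"
  by (auto simp: mid_states_def)

lemma sum_mid_states_Suc:
  "(\<Sum>ys\<in>mid_states n (Suc t). f ys) = (\<Sum>k\<in>{2..n}. \<Sum>ys\<in>mid_states n t. f (k # ys))"
proof -
  have e: "mid_states n (Suc t) = (\<lambda>(xs, k). k # xs) ` (mid_states n t \<times> {2..n})"
    unfolding mid_states_def by (rule lists_length_Suc_eq)
  have i: "inj_on (\<lambda>(xs, k). k # xs) (mid_states n t \<times> {2..n})"
    by (auto simp: inj_on_def)
  have "(\<Sum>ys\<in>mid_states n (Suc t). f ys) = (\<Sum>(xs, k)\<in>mid_states n t \<times> {2..n}. f (k # xs))"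
    unfolding e by (subst sum.reindex[OF i]) (simp add: case_prod_beta)
  also have "\<dots> = (\<Sum>xs\<in>mid_states n t. \<Sum>k\<in>{2..n}. f (k # xs))"
    by (rule sum.cartesian_product[symmetric])
  also have "\<dots> = (\<Sum>k\<in>{2..n}. \<Sum>ys\<in>mid_states n t. f (k # ys))"
    by (rule sum.swap)
  finally show ?thesis .
qed

lemma complete_paths_0: "complete_paths n 0 = {}"
  unfolding complete_paths_def by auto

lemma complete_paths_Suc:
  assumes "1 \<le> n"
  shows "complete_paths n (Suc t) = (\<lambda>ys. ys @ [1]) ` mid_states n t"
proof
  show "(\<lambda>ys. ys @ [1]) ` mid_states n t \<subseteq> complete_paths n (Suc t)"
  proof
    fix xs assume "xs \<in> (\<lambda>ys. ys @ [1]) ` mid_states n t"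
    then obtain ys where ys: "set ys \<subseteq> {2..n}" "length ys = t" "xs = ys @ [1]"
      by (auto simp: mid_states_def)
    have "2 \<le> xs ! i" if "i < t" for i
    proof -
      have "ys ! i \<in> set ys" using that ys(2) by simp
      with ys(1) have "ys ! i \<in> {2..n}" by blast
      then show ?thesis using that ys by (simp add: nth_append)
    qed
    then show "xs \<in> complete_paths n (Suc t)"
      using ys assms by (auto simp: complete_paths_def)
  qed
next
  show "complete_paths n (Suc t) \<subseteq> (\<lambda>ys. ys @ [1]) ` mid_states n t"
  proof
    fix xs assume xs: "xs \<in> complete_paths n (Suc t)"
    then have l: "length xs = Suc t" and s: "set xs \<subseteq> {1..n}" and g: "\<forall>i<t. 2 \<le> xs ! i"
      and lst: "last xs = 1"
      by (auto simp: complete_paths_def)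
    have split: "xs = butlast xs @ [1]"
      using append_butlast_last_id[of xs] lst l by force
    have "x \<in> {2..n}" if x: "x \<in> set (butlast xs)" for x
    proof -
      obtain i where i: "i < t" "xs ! i = x"
        using x l by (auto simp: in_set_conv_nth nth_butlast)
      have "xs ! i \<in> set xs" by (rule nth_mem) (use i l in simp)
      then show ?thesis using g s i by auto
    qed
    then have "butlast xs \<in> mid_states n t" using l by (auto simp: mid_states_def)
    then show "xs \<in> (\<lambda>ys. ys @ [1]) ` mid_states n t" using split by blast
  qed
qed

lemma sum_complete_paths_Suc:
  assumes "1 \<le> n"
  shows "(\<Sum>xs\<in>complete_paths n (Suc t). f xs) = (\<Sum>ys\<in>mid_states n t. f (ys @ [1]))"
  unfolding complete_paths_Suc[OF assms] by (subst sum.reindex) (simp_all add: inj_on_def)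

lemma finite_complete_paths: "finite (complete_paths n t)"
proof (rule finite_subset)
  show "complete_paths n t \<subseteq> {xs. set xs \<subseteq> {1..n} \<and> length xs = t}"
    by (auto simp: complete_paths_def)
qed (rule finite_lists_length_eq, simp)

lemma hit_time_Cons:
  assumes "\<exists>i<length xs. xs ! i \<le> m"
  shows "hit_time m (k # xs) = (if k \<le> m then 1 else Suc (hit_time m xs))"
proof (cases "k \<le> m")
  case True
  then show ?thesis unfolding hit_time_def by (subst Least_eq_0) auto
next
  case False
  obtain i where i: "i < length xs" "xs ! i \<le> m" using assms by blast
  have "(LEAST i. i < length (k # xs) \<and> (k # xs) ! i \<le> m) =
        Suc (LEAST i. Suc i < length (k # xs) \<and> (k # xs) ! Suc i \<le> m)"
    by (rule Least_Suc[where n = "Suc i"]) (use i False in auto)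
  then show ?thesis using False unfolding hit_time_def by simp
qed

lemma hit_time_end: "1 \<le> m \<Longrightarrow> hit_time m [1] = 1"
  unfolding hit_time_def by (subst Least_eq_0) auto

lemma hit_time_Cons_play:
  "1 \<le> m \<Longrightarrow> hit_time m (k # ys @ [1]) = (if k \<le> m then 1 else Suc (hit_time m (ys @ [1])))"
  by (rule hit_time_Cons) (auto intro!: exI[of _ "length ys"])

lemma hit_time_1_play: "set ys \<subseteq> {2..n} \<Longrightarrow> hit_time 1 (ys @ [1]) = Suc (length ys)"
  by (induction ys) (auto simp: hit_time_end[simplified] hit_time_Cons_play[simplified])

lemma hit_time_2_less_1_play:
  "set ys \<subseteq> {2..n} \<Longrightarrow> hit_time 2 (ys @ [1]) < hit_time 1 (ys @ [1]) \<longleftrightarrow> 2 \<in> set ys"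
proof (induction ys)
  case Nil then show ?case by (simp add: hit_time_end[simplified])
next
  case (Cons k ys)
  then show ?case by (auto simp: hit_time_Cons_play[simplified] hit_time_1_play[simplified])
qed


section \<open>The equilibrium transition kernel\<close>

definition nobid_prob :: "real \<Rightarrow> nat \<Rightarrow> real" where
  "nobid_prob lm m = lm powr (1 / (real m - 1))"

lemma nobid_prob_bounds:
  assumes "0 < lm" "lm < 1" "2 \<le> m"
  shows "0 < nobid_prob lm m" "nobid_prob lm m < 1"
proof -
  have e: "0 < 1 / (real m - 1)" using assms by simp
  show "0 < nobid_prob lm m" using assms by (simp add: nobid_prob_def)
  have "lm powr (1 / (real m - 1)) < 1 powr (1 / (real m - 1))"
    by (rule powr_less_mono2[OF e]) (use assms in auto)
  then show "nobid_prob lm m < 1" by (simp add: nobid_prob_def)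
qed

text \<open>Indifference condition of the equilibrium: all m-1 opponents abstain with probability \<lambda>.\<close>
lemma nobid_prob_power:
  assumes "0 < lm" "2 \<le> m"
  shows "nobid_prob lm m ^ (m - 1) = lm"
proof -
  have "nobid_prob lm m ^ (m - 1) = lm powr (real (m - 1) * (1 / (real m - 1)))"
    unfolding nobid_prob_def by (rule powr_power) (use assms in simp)
  also have "real (m - 1) * (1 / (real m - 1)) = 1" using assms by (simp add: of_nat_diff)
  finally show ?thesis using assms by simp
qed

lemma nobid_prob_all:
  assumes "0 < lm" "lm < 1" "2 \<le> m"
  shows "0 < 1 - nobid_prob lm m ^ m" "1 - nobid_prob lm m ^ m \<le> 1"
  using nobid_prob_bounds[OF assms] assms by (simp_all add: power_less_one_iff)

lemma trans_eq:
  "trans lm m k = (if 1 \<le> k \<and> k \<le> m then real (m choose k) * (1 - nobid_prob lm m) ^ k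
     * nobid_prob lm m ^ (m - k) / (1 - nobid_prob lm m ^ m) else 0)"
  by (simp add: trans_def bid_prob_def nobid_prob_def Let_def)

lemma trans_nonneg:
  assumes "0 < lm" "lm < 1"
  shows "0 \<le> trans lm m k"
proof (cases "2 \<le> m")
  case True
  then show ?thesis
    unfolding trans_eq using nobid_prob_bounds[OF assms True] nobid_prob_all[OF assms True] by simp
next
  case False
  then have "m = 0 \<or> m = 1" by auto
  then show ?thesis using assms by (auto simp: trans_def bid_prob_def Let_def)
qed

lemma trans_up: "m < k \<Longrightarrow> trans lm m k = 0"
  by (simp add: trans_def Let_def)

text \<open>The kernel is stochastic: by the binomial theorem, conditioning on at least one bid.\<close>
lemma trans_sum_upto_m:
  assumes "0 < lm" "lm < 1" "2 \<le> m"
  shows "(\<Sum>k\<in>{1..m}. trans lm m k) = 1"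
proof -
  define q where "q = nobid_prob lm m"
  have "((1 - q) + q) ^ m = (\<Sum>k\<le>m. real (m choose k) * (1 - q) ^ k * q ^ (m - k))"
    by (rule binomial_ring)
  also have "{..m} = insert 0 {1..m}" by auto
  finally have bin: "(\<Sum>k\<in>{1..m}. real (m choose k) * (1 - q) ^ k * q ^ (m - k)) = 1 - q ^ m"
    by simp
  have "(\<Sum>k\<in>{1..m}. trans lm m k)
      = (\<Sum>k\<in>{1..m}. real (m choose k) * (1 - q) ^ k * q ^ (m - k)) / (1 - q ^ m)"
    unfolding sum_divide_distrib by (rule sum.cong) (simp_all add: trans_eq q_def)
  also have "\<dots> = 1" using bin nobid_prob_all[OF assms] by (simp add: q_def)
  finally show ?thesis .
qed

lemma trans_sum:
  assumes "0 < lm" "lm < 1" "2 \<le> m" "m \<le> n"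
  shows "(\<Sum>k\<in>{1..n}. trans lm m k) = 1"
proof -
  have "{1..n} = {1..m} \<union> {m<..n}" using assms by auto
  moreover have "(\<Sum>k\<in>{m<..n}. trans lm m k) = 0" by (simp add: trans_up)
  ultimately show ?thesis using trans_sum_upto_m[OF assms(1-3)]
    by (simp add: sum.union_disjoint ivl_disj_int)
qed

text \<open>Ending the game in one round: exactly one bidder; this is O(\<lambda>).\<close>
lemma trans_end:
  assumes "0 < lm" "lm < 1" "2 \<le> m"
  shows "trans lm m 1 = real m * (1 - nobid_prob lm m) * lm / (1 - nobid_prob lm m ^ m)"
  unfolding trans_eq using nobid_prob_power[OF assms(1,3)] assms by simp

lemma trans_end_pos:
  assumes "0 < lm" "lm < 1" "2 \<le> m"
  shows "0 < trans lm m 1"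
  unfolding trans_end[OF assms] using nobid_prob_bounds[OF assms] nobid_prob_all[OF assms] assms
  by simp

text \<open>Leaving state m is at least as likely as losing exactly one player, which has
  probability at least m (1-q)^(m-1) q: this is of order \<lambda>^(1/(m-1)).\<close>
lemma trans_leave_lower:
  assumes "0 < lm" "lm < 1" "2 \<le> m"
  shows "real m * (1 - nobid_prob lm m) ^ (m - 1) * nobid_prob lm m \<le> 1 - trans lm m m"
proof -
  define q where "q = nobid_prob lm m"
  have q: "0 < q" "q < 1" "0 < 1 - q ^ m" "1 - q ^ m \<le> 1"
    using nobid_prob_bounds[OF assms] nobid_prob_all[OF assms] by (simp_all add: q_def)
  have split: "{1..m} = insert m (insert (m - 1) ({1..m} - {m, m - 1}))" using assms by auto
  have "1 = trans lm m m + trans lm m (m - 1) + (\<Sum>k\<in>{1..m} - {m, m - 1}. trans lm m k)"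
    using trans_sum_upto_m[OF assms] assms by (subst (asm) split) simp
  moreover have "0 \<le> (\<Sum>k\<in>{1..m} - {m, m - 1}. trans lm m k)"
    by (rule sum_nonneg) (simp add: trans_nonneg assms)
  ultimately have "trans lm m (m - 1) \<le> 1 - trans lm m m" by simp
  moreover have "trans lm m (m - 1) = real m * (1 - q) ^ (m - 1) * q / (1 - q ^ m)"
  proof -
    obtain j where "m = Suc j" using assms by (cases m) auto
    then show ?thesis unfolding trans_eq q_def using assms by simp
  qed
  moreover have "real m * (1 - q) ^ (m - 1) * q \<le> real m * (1 - q) ^ (m - 1) * q / (1 - q ^ m)"
    using q by (simp add: le_divide_eq mult_left_le)
  ultimately show ?thesis by (simp add: q_def)
qed

lemma trans_leave_pos:
  assumes "0 < lm" "lm < 1" "2 \<le> m"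
  shows "0 < 1 - trans lm m m"
proof -
  have "0 < real m * (1 - nobid_prob lm m) ^ (m - 1) * nobid_prob lm m"
    using nobid_prob_bounds[OF assms] assms by simp
  then show ?thesis using trans_leave_lower[OF assms] by linarith
qed

lemma trans_others:
  assumes "0 < lm" "lm < 1" "2 \<le> m" "m \<le> n" "A \<subseteq> {1..n} - {m}"
  shows "(\<Sum>k\<in>A. trans lm m k) \<le> 1 - trans lm m m"
proof -
  have "(\<Sum>k\<in>A. trans lm m k) \<le> (\<Sum>k\<in>{1..n} - {m}. trans lm m k)"
    by (rule sum_mono2) (use assms trans_nonneg in auto)
  also have "\<dots> = 1 - trans lm m m"
    using trans_sum[OF assms(1-4)] assms by (subst sum_diff1) auto
  finally show ?thesis .
qed


section \<open>Sub-solutions of the renewal inequality of a downward kernel\<close>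

text \<open>If X satisfies the renewal
  inequality X(m, J+1) \<le> a m + \<Sigma>_k P m k X(k, J) with a m \<le> (1 - P m m) \<eta>, then
  X(m, J) \<le> (m - lo + 1) \<eta>: each state below m contributes at most its sojourn cost \<eta>.\<close>
lemma downward_kernel_bound_aux:
  fixes P X :: "nat \<Rightarrow> nat \<Rightarrow> real" and a :: "nat \<Rightarrow> real"
  assumes P_nonneg: "\<And>m k. 0 \<le> P m k"
    and P_down: "\<And>m k. m < k \<Longrightarrow> P m k = 0"
    and P_others: "\<And>m. m \<in> {lo..n} \<Longrightarrow> (\<Sum>k\<in>{lo..n} - {m}. P m k) \<le> 1 - P m m"
    and step: "\<And>m J. m \<in> {lo..n} \<Longrightarrow> X m (Suc J) \<le> a m + (\<Sum>k\<in>{lo..n}. P m k * X k J)"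
    and base: "\<And>m. m \<in> {lo..n} \<Longrightarrow> X m 0 \<le> 0"
    and a_le: "\<And>m. m \<in> {lo..n} \<Longrightarrow> a m \<le> (1 - P m m) * \<eta>"
    and eta: "0 \<le> \<eta>"
  shows "m \<in> {lo..n} \<Longrightarrow> X m J \<le> (real m - real lo + 1) * \<eta>"
proof (induction J arbitrary: m)
  case 0
  then show ?case using base[OF 0] eta by (simp add: order_trans[OF _ mult_nonneg_nonneg])
next
  case (Suc J)
  note m = Suc.prems
  define B where "B = (real m - real lo) * \<eta>"
  have B: "0 \<le> B" using m eta by (simp add: B_def)
  have below: "P m k * X k J \<le> P m k * B" if k: "k \<in> {lo..n} - {m}" for k
  proof (cases "m < k")
    case False
    then have "real k - real lo + 1 \<le> real m - real lo" using k by auto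
    then have "X k J \<le> B"
      using Suc.IH[of k] k eta unfolding B_def by (meson DiffD1 mult_right_mono order_trans)
    then show ?thesis using P_nonneg by (simp add: mult_left_mono)
  qed (simp add: P_down)
  have "(\<Sum>k\<in>{lo..n}. P m k * X k J) = P m m * X m J + (\<Sum>k\<in>{lo..n} - {m}. P m k * X k J)"
    using m by (simp add: sum.remove)
  also have "\<dots> \<le> P m m * (B + \<eta>) + (1 - P m m) * B"
  proof (rule add_mono)
    have "X m J \<le> B + \<eta>" using Suc.IH[OF m] by (simp add: B_def algebra_simps)
    then show "P m m * X m J \<le> P m m * (B + \<eta>)" using P_nonneg by (rule mult_left_mono)
    have "(\<Sum>k\<in>{lo..n} - {m}. P m k * X k J) \<le> (\<Sum>k\<in>{lo..n} - {m}. P m k) * B"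
      unfolding sum_distrib_right by (rule sum_mono) (rule below)
    also have "\<dots> \<le> (1 - P m m) * B" using P_others[OF m] B by (rule mult_right_mono)
    finally show "(\<Sum>k\<in>{lo..n} - {m}. P m k * X k J) \<le> (1 - P m m) * B" .
  qed
  finally have "X m (Suc J) \<le> a m + P m m * (B + \<eta>) + (1 - P m m) * B"
    using step[OF m, of J] by linarith
  also have "\<dots> \<le> B + \<eta>" using a_le[OF m] by (simp add: algebra_simps)
  finally show ?case by (simp add: B_def algebra_simps)
qed

text \<open>The natural choice \<eta> = \<Sigma>_k a k / (1 - P k k): the total cost of visiting every state,
  each for its expected geometric sojourn time.\<close>
lemma downward_kernel_bound:
  fixes P X :: "nat \<Rightarrow> nat \<Rightarrow> real" and a :: "nat \<Rightarrow> real"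
  assumes P_nonneg: "\<And>m k. 0 \<le> P m k"
    and P_down: "\<And>m k. m < k \<Longrightarrow> P m k = 0"
    and P_others: "\<And>m. m \<in> {lo..n} \<Longrightarrow> (\<Sum>k\<in>{lo..n} - {m}. P m k) \<le> 1 - P m m"
    and P_leave: "\<And>m. m \<in> {lo..n} \<Longrightarrow> 0 < 1 - P m m"
    and a_nonneg: "\<And>m. m \<in> {lo..n} \<Longrightarrow> 0 \<le> a m"
    and step: "\<And>m J. m \<in> {lo..n} \<Longrightarrow> X m (Suc J) \<le> a m + (\<Sum>k\<in>{lo..n}. P m k * X k J)"
    and base: "\<And>m. m \<in> {lo..n} \<Longrightarrow> X m 0 \<le> 0"
    and m: "m \<in> {lo..n}"
  shows "X m J \<le> (real m - real lo + 1) * (\<Sum>k\<in>{lo..n}. a k / (1 - P k k))"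
proof (rule downward_kernel_bound_aux[OF P_nonneg P_down P_others step base _ _ m])
  show "0 \<le> (\<Sum>k\<in>{lo..n}. a k / (1 - P k k))"
    using a_nonneg P_leave by (intro sum_nonneg) (simp add: less_imp_le)
  fix m' assume m': "m' \<in> {lo..n}"
  have "a m' / (1 - P m' m') \<le> (\<Sum>k\<in>{lo..n}. a k / (1 - P k k))"
    by (rule member_le_sum) (use m' a_nonneg P_leave in \<open>auto intro: divide_nonneg_pos\<close>)
  then show "a m' \<le> (1 - P m' m') * (\<Sum>k\<in>{lo..n}. a k / (1 - P k k))"
    using P_leave[OF m'] by (simp add: divide_le_eq mult.commute)
qed

lemma path_prob_nonneg: "0 < lm \<Longrightarrow> lm < 1 \<Longrightarrow> 0 \<le> path_prob lm m xs"
  by (induction xs arbitrary: m) (auto simp: trans_nonneg)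

text \<open>Probability that the game started with m active players ends exactly in round t+1.\<close>
definition end_prob :: "real \<Rightarrow> nat \<Rightarrow> nat \<Rightarrow> nat \<Rightarrow> real" where
  "end_prob lm n m t = (\<Sum>ys\<in>mid_states n t. path_prob lm m (ys @ [1]))"

definition avoid2_prob :: "real \<Rightarrow> nat \<Rightarrow> nat \<Rightarrow> nat \<Rightarrow> real" where
  "avoid2_prob lm n m t =
     (\<Sum>ys\<in>mid_states n t. if 2 \<in> set ys then 0 else path_prob lm m (ys @ [1]))"

definition hit2_weight :: "real \<Rightarrow> nat \<Rightarrow> nat \<Rightarrow> nat \<Rightarrow> real" where
  "hit2_weight lm n m t =
     (\<Sum>ys\<in>mid_states n t. path_prob lm m (ys @ [1]) * real (hit_time 2 (ys @ [1])))"

lemma end_prob_nonneg: "0 < lm \<Longrightarrow> lm < 1 \<Longrightarrow> 0 \<le> end_prob lm n m t"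
  unfolding end_prob_def by (intro sum_nonneg path_prob_nonneg)

lemma avoid2_prob_nonneg: "0 < lm \<Longrightarrow> lm < 1 \<Longrightarrow> 0 \<le> avoid2_prob lm n m t"
  unfolding avoid2_prob_def by (intro sum_nonneg) (auto intro: path_prob_nonneg)

lemma hit2_weight_nonneg: "0 < lm \<Longrightarrow> lm < 1 \<Longrightarrow> 0 \<le> hit2_weight lm n m t"
  unfolding hit2_weight_def by (intro sum_nonneg mult_nonneg_nonneg path_prob_nonneg) auto

lemma end_prob_0: "end_prob lm n m 0 = trans lm m 1"
  by (simp add: end_prob_def mid_states_0)

lemma avoid2_prob_0: "avoid2_prob lm n m 0 = trans lm m 1"
  by (simp add: avoid2_prob_def mid_states_0)

lemma hit2_weight_0: "hit2_weight lm n m 0 = trans lm m 1"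
  by (simp add: hit2_weight_def mid_states_0 hit_time_end[simplified])

lemma end_prob_Suc: "end_prob lm n m (Suc t) = (\<Sum>k\<in>{2..n}. trans lm m k * end_prob lm n k t)"
  unfolding end_prob_def sum_mid_states_Suc by (simp add: sum_distrib_left)

lemma sum_drop_two:
  fixes f :: "nat \<Rightarrow> real"
  assumes "2 \<le> n"
  shows "(\<Sum>k\<in>{2..n}. if k = 2 then 0 else f k) = (\<Sum>k\<in>{3..n}. f k)"
proof -
  have "{2..n} = insert 2 {3..n}" using assms by (auto simp: eval_nat_numeral)
  then show ?thesis by (simp add: sum.insert)
qed

lemma avoid2_prob_Suc:
  assumes "2 \<le> n"
  shows "avoid2_prob lm n m (Suc t) = (\<Sum>k\<in>{3..n}. trans lm m k * avoid2_prob lm n k t)"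
proof -
  have "avoid2_prob lm n m (Suc t) =
      (\<Sum>k\<in>{2..n}. if k = 2 then 0 else trans lm m k * avoid2_prob lm n k t)"
    unfolding avoid2_prob_def sum_mid_states_Suc
    by (intro sum.cong) (auto simp: sum_distrib_left intro!: sum.cong)
  then show ?thesis using sum_drop_two[OF assms] by simp
qed

lemma hit2_weight_Suc:
  assumes "2 \<le> n"
  shows "hit2_weight lm n m (Suc t) =
    end_prob lm n m (Suc t) + (\<Sum>k\<in>{3..n}. trans lm m k * hit2_weight lm n k t)"
proof -
  have "hit2_weight lm n m (Suc t) = (\<Sum>k\<in>{2..n}. trans lm m k * end_prob lm n k t
      + (if k = 2 then 0 else trans lm m k * hit2_weight lm n k t))"
    unfolding hit2_weight_def end_prob_def sum_mid_states_Suc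
    by (intro sum.cong) (auto simp: hit_time_Cons_play[simplified] sum_distrib_left
        sum.distrib[symmetric] algebra_simps intro!: sum.cong)
  also have "\<dots> = end_prob lm n m (Suc t) + (\<Sum>k\<in>{3..n}. trans lm m k * hit2_weight lm n k t)"
    unfolding sum.distrib end_prob_Suc sum_drop_two[OF assms] ..
  finally show ?thesis .
qed

lemma suminf_complete_paths:
  fixes F :: "nat list \<Rightarrow> real"
  assumes "1 \<le> n" and "(\<lambda>t. \<Sum>ys\<in>mid_states n t. F (ys @ [1])) sums s"
  shows "(\<Sum>t. \<Sum>xs\<in>complete_paths n t. F xs) = s"
proof -
  have "(\<lambda>t. \<Sum>xs\<in>complete_paths n (Suc t). F xs) sums s"
    using assms by (simp add: sum_complete_paths_Suc)
  then have "(\<lambda>t. \<Sum>xs\<in>complete_paths n t. F xs) sums s"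
    using sums_Suc_iff[of "\<lambda>t. \<Sum>xs\<in>complete_paths n t. F xs" s] by (simp add: complete_paths_0)
  then show ?thesis by (simp add: sums_iff)
qed


section \<open>Bounds on the equilibrium quantities for fixed \<lambda>\<close>

text \<open>Expected total time spent in the states {lo..n}: state k is left after a geometric
  number of rounds with mean 1 / (1 - trans \<lambda> k k).\<close>
definition sojourn_sum :: "real \<Rightarrow> nat \<Rightarrow> nat \<Rightarrow> real" where
  "sojourn_sum lm lo n = (\<Sum>k\<in>{lo..n}. 1 / (1 - trans lm k k))"

text \<open>Total rate at which the game ends from some state; its reciprocal bounds E[T_{n,1}].\<close>
definition exit_rate :: "real \<Rightarrow> nat \<Rightarrow> real" where
  "exit_rate lm n = (\<Sum>k\<in>{2..n}. trans lm k 1)"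

text \<open>Bound on the probability of jumping to the end directly from some state k \<ge> 3.\<close>
definition direct_exit :: "real \<Rightarrow> nat \<Rightarrow> real" where
  "direct_exit lm n = (\<Sum>k\<in>{3..n}. trans lm k 1 / (1 - trans lm k k))"

lemma sum_swap_rounds:
  fixes c :: "nat \<Rightarrow> real"
  shows "(\<Sum>t<J. \<Sum>k\<in>A. c k * g k t) = (\<Sum>k\<in>A. c k * (\<Sum>t<J. g k t))"
  by (simp add: sum.swap[of _ "{..<J}"] sum_distrib_left)

locale equilibrium =
  fixes lm :: real and n :: nat
  assumes lm_pos: "0 < lm" and lm_less_1: "lm < 1" and two_le_n: "2 \<le> n"
begin

lemmas lm = lm_pos lm_less_1

lemma trans_kernel_bound:
  fixes X :: "nat \<Rightarrow> nat \<Rightarrow> real" and a :: "nat \<Rightarrow> real"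
  assumes "2 \<le> lo" and "\<And>m. m \<in> {lo..n} \<Longrightarrow> 0 \<le> a m"
    and "\<And>m J. m \<in> {lo..n} \<Longrightarrow> X m (Suc J) \<le> a m + (\<Sum>k\<in>{lo..n}. trans lm m k * X k J)"
    and "\<And>m. m \<in> {lo..n} \<Longrightarrow> X m 0 \<le> 0" and "m \<in> {lo..n}"
  shows "X m J \<le> (real m - real lo + 1) * (\<Sum>k\<in>{lo..n}. a k / (1 - trans lm k k))"
proof (rule downward_kernel_bound[where P = "trans lm", OF trans_nonneg[OF lm] trans_up _ _ assms(2-5)])
  fix m assume m: "m \<in> {lo..n}"
  then show "(\<Sum>k\<in>{lo..n} - {m}. trans lm m k) \<le> 1 - trans lm m m"
    using assms(1) by (intro trans_others[OF lm]) auto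
  show "0 < 1 - trans lm m m" using m assms(1) by (intro trans_leave_pos[OF lm]) auto
qed

lemma trans_split_end: "m \<in> {2..n} \<Longrightarrow> trans lm m 1 + (\<Sum>k\<in>{2..n}. trans lm m k) = 1"
proof -
  assume m: "m \<in> {2..n}"
  have "{1..n} = insert 1 {2..n}" using two_le_n by auto
  then show ?thesis using trans_sum[OF lm, of m n] m by simp
qed

definition ended_by :: "nat \<Rightarrow> nat \<Rightarrow> real" where
  "ended_by m J = (\<Sum>t<J. end_prob lm n m t)"

lemma ended_by_Suc: "ended_by m (Suc J) = trans lm m 1 + (\<Sum>k\<in>{2..n}. trans lm m k * ended_by k J)"
  unfolding ended_by_def sum.lessThan_Suc_shift end_prob_0 end_prob_Suc sum_swap_rounds ..

lemma ended_by_le_1: "m \<in> {2..n} \<Longrightarrow> ended_by m J \<le> 1"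
proof (induction J arbitrary: m)
  case (Suc J)
  have "(\<Sum>k\<in>{2..n}. trans lm m k * ended_by k J) \<le> (\<Sum>k\<in>{2..n}. trans lm m k)"
    by (rule sum_mono) (use Suc.IH trans_nonneg[OF lm] in \<open>auto intro: mult_left_le\<close>)
  then show ?case unfolding ended_by_Suc using trans_split_end[OF Suc.prems] by linarith
qed (simp add: ended_by_def)

text \<open>E[min(T, J)] = \<Sigma>_{K<J} Pr{T > K}.\<close>
definition trunc_mean :: "nat \<Rightarrow> nat \<Rightarrow> real" where
  "trunc_mean m J = (\<Sum>K<J. 1 - ended_by m K)"

lemma trunc_mean_Suc:
  assumes "m \<in> {2..n}"
  shows "trunc_mean m (Suc J) = 1 + (\<Sum>k\<in>{2..n}. trans lm m k * trunc_mean k J)"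
proof -
  have "1 - ended_by m (Suc K) = (\<Sum>k\<in>{2..n}. trans lm m k * (1 - ended_by k K))" for K
    unfolding ended_by_Suc using trans_split_end[OF assms]
    by (simp add: algebra_simps sum_subtractf)
  then show ?thesis unfolding trunc_mean_def sum.lessThan_Suc_shift
    by (simp add: ended_by_def sum_swap_rounds)
qed

lemma end_prob_sums: assumes m: "m \<in> {2..n}" shows "end_prob lm n m sums 1"
proof -
  have nonneg: "0 \<le> 1 - ended_by m K" for K using ended_by_le_1[OF m] by simp
  have "trunc_mean m J \<le> (real m - 2 + 1) * sojourn_sum lm 2 n" for J
    using trans_kernel_bound[of 2 "\<lambda>_. 1" trunc_mean m J] trunc_mean_Suc m
    by (simp add: trunc_mean_def sojourn_sum_def)
  then have "summable (\<lambda>K. 1 - ended_by m K)"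
    by (intro summableI_nonneg_bounded[OF nonneg]) (simp add: trunc_mean_def)
  then have "(\<lambda>K. 1 - (1 - ended_by m K)) \<longlonglongrightarrow> 1 - 0"
    by (intro tendsto_diff tendsto_const summable_LIMSEQ_zero)
  then show ?thesis unfolding sums_def by (simp add: ended_by_def)
qed

definition partial_mean :: "nat \<Rightarrow> nat \<Rightarrow> real" where
  "partial_mean m J = (\<Sum>t<J. real (Suc t) * end_prob lm n m t)"

lemma partial_mean_Suc:
  "partial_mean m (Suc J) = ended_by m (Suc J) + (\<Sum>k\<in>{2..n}. trans lm m k * partial_mean k J)"
proof -
  have "partial_mean m (Suc J) = end_prob lm n m 0
      + (\<Sum>t<J. end_prob lm n m (Suc t) + real (Suc t) * end_prob lm n m (Suc t))"
    unfolding partial_mean_def sum.lessThan_Suc_shift by (simp add: algebra_simps)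
  also have "\<dots> = ended_by m (Suc J) + (\<Sum>k\<in>{2..n}. trans lm m k * partial_mean k J)"
    unfolding ended_by_def sum.lessThan_Suc_shift sum.distrib partial_mean_def end_prob_Suc
      sum_swap_rounds[symmetric] by (simp add: sum_distrib_left algebra_simps)
  finally show ?thesis .
qed

lemma mean_summable:
  assumes m: "m \<in> {2..n}"
  shows "summable (\<lambda>t. real (Suc t) * end_prob lm n m t)"
proof (rule summableI_nonneg_bounded)
  fix J
  show "(\<Sum>t<J. real (Suc t) * end_prob lm n m t) \<le> (real m - 2 + 1) * sojourn_sum lm 2 n"
    using trans_kernel_bound[of 2 "\<lambda>_. 1" partial_mean m J] partial_mean_Suc ended_by_le_1 m
    by (fastforce simp: partial_mean_def sojourn_sum_def add_mono)
qed (simp add: end_prob_nonneg[OF lm])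

definition mean_rounds :: "nat \<Rightarrow> real" where
  "mean_rounds m = (\<Sum>t. real (Suc t) * end_prob lm n m t)"

lemma mean_rounds_first_step:
  assumes m: "m \<in> {2..n}"
  shows "mean_rounds m = 1 + (\<Sum>k\<in>{2..n}. trans lm m k * mean_rounds k)"
proof -
  have lim: "(\<lambda>J. partial_mean k J) \<longlonglongrightarrow> mean_rounds k" if "k \<in> {2..n}" for k
    unfolding partial_mean_def mean_rounds_def using mean_summable[OF that] by (rule summable_LIMSEQ)
  have ended: "(\<lambda>J. ended_by m J) \<longlonglongrightarrow> 1"
    using end_prob_sums[OF m] unfolding sums_def ended_by_def .
  have "(\<lambda>J. partial_mean m (Suc J)) \<longlonglongrightarrow> 1 + (\<Sum>k\<in>{2..n}. trans lm m k * mean_rounds k)"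
    unfolding partial_mean_Suc
    by (intro tendsto_add tendsto_sum tendsto_mult tendsto_const LIMSEQ_Suc ended lim) auto
  then show ?thesis using LIMSEQ_unique LIMSEQ_Suc[OF lim[OF m]] by blast
qed

text \<open>Applying the first-step equation at a state of minimal expected length shows that
  this minimum is at least the reciprocal of the one-step ending probability there.\<close>
lemma mean_rounds_lower:
  assumes m: "m \<in> {2..n}"
  shows "1 / exit_rate lm n \<le> mean_rounds m"
proof -
  define mu where "mu = Min (mean_rounds ` {2..n})"
  have "mu \<in> mean_rounds ` {2..n}" unfolding mu_def by (rule Min_in) (use two_le_n in auto)
  then obtain k0 where k0: "k0 \<in> {2..n}" "mean_rounds k0 = mu" by auto
  have le: "mu \<le> mean_rounds k" if "k \<in> {2..n}" for k unfolding mu_def using that by auto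
  have "(1 - trans lm k0 1) * mu = (\<Sum>k\<in>{2..n}. trans lm k0 k * mu)"
    using trans_split_end[OF k0(1)] by (simp add: sum_distrib_right[symmetric])
  also have "\<dots> \<le> (\<Sum>k\<in>{2..n}. trans lm k0 k * mean_rounds k)"
    by (rule sum_mono) (use le trans_nonneg[OF lm] in \<open>auto intro: mult_left_mono\<close>)
  finally have one: "1 \<le> trans lm k0 1 * mu"
    using mean_rounds_first_step[OF k0(1)] k0(2) by (simp add: algebra_simps)
  have pos: "0 < trans lm k0 1" by (rule trans_end_pos[OF lm]) (use k0 in auto)
  have "trans lm k0 1 \<le> exit_rate lm n" unfolding exit_rate_def
    by (rule member_le_sum) (use k0 trans_nonneg[OF lm] in auto)
  then have "1 / exit_rate lm n \<le> 1 / trans lm k0 1"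
    using pos by (intro divide_left_mono) auto
  also have "\<dots> \<le> mu" using one pos by (simp add: divide_le_eq mult.commute)
  also have "\<dots> \<le> mean_rounds m" by (rule le[OF m])
  finally show ?thesis .
qed

lemma expected_T_1: "expected_T n 1 lm = mean_rounds n"
  unfolding expected_T_def
proof (rule suminf_complete_paths)
  have "(\<Sum>ys\<in>mid_states n t. path_prob lm n (ys @ [1]) * real (hit_time 1 (ys @ [1])))
      = real (Suc t) * end_prob lm n n t" for t
    unfolding end_prob_def sum_distrib_left
    by (intro sum.cong refl) (auto simp: mid_states_def hit_time_1_play[simplified])
  then show "(\<lambda>t. \<Sum>ys\<in>mid_states n t. path_prob lm n (ys @ [1]) * real (hit_time 1 (ys @ [1])))
      sums mean_rounds n"
    using summable_sums[OF mean_summable] two_le_n by (simp add: mean_rounds_def)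
qed (use two_le_n in simp)

lemma expected_T_1_lower: "1 / exit_rate lm n \<le> expected_T n 1 lm"
  unfolding expected_T_1 by (rule mean_rounds_lower) (use two_le_n in simp)


text \<open>Partial sums of E[T_{m,2}]: until state 2 (or 1) is reached the chain only uses
  the states {3..n}.\<close>
definition partial_hit2 :: "nat \<Rightarrow> nat \<Rightarrow> real" where
  "partial_hit2 m J = (\<Sum>t<J. hit2_weight lm n m t)"

lemma partial_hit2_Suc:
  "partial_hit2 m (Suc J) = ended_by m (Suc J) + (\<Sum>k\<in>{3..n}. trans lm m k * partial_hit2 k J)"
  unfolding partial_hit2_def ended_by_def sum.lessThan_Suc_shift hit2_weight_0
    hit2_weight_Suc[OF two_le_n] end_prob_0 sum.distrib sum_swap_rounds
  by simp

lemma expected_T_2_bounds: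
  assumes "3 \<le> n"
  shows "0 \<le> expected_T n 2 lm" "expected_T n 2 lm \<le> (real n - 2) * sojourn_sum lm 3 n"
proof -
  have bound: "partial_hit2 n J \<le> (real n - 2) * sojourn_sum lm 3 n" for J
    using trans_kernel_bound[of 3 "\<lambda>_. 1" partial_hit2 n J] partial_hit2_Suc ended_by_le_1 assms
    by (fastforce simp: partial_hit2_def sojourn_sum_def add_mono)
  have sm: "summable (hit2_weight lm n n)"
    by (rule summableI_nonneg_bounded[OF hit2_weight_nonneg[OF lm]])
       (use bound in \<open>simp add: partial_hit2_def\<close>)
  have "(\<lambda>t. \<Sum>ys\<in>mid_states n t. path_prob lm n (ys @ [1]) * real (hit_time 2 (ys @ [1])))
      sums suminf (hit2_weight lm n n)"
    using summable_sums[OF sm] unfolding hit2_weight_def[abs_def] .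
  then have e: "expected_T n 2 lm = suminf (hit2_weight lm n n)"
    unfolding expected_T_def by (intro suminf_complete_paths) (use two_le_n in simp_all)
  show "0 \<le> expected_T n 2 lm"
    unfolding e by (rule suminf_nonneg[OF sm hit2_weight_nonneg[OF lm]])
  show "expected_T n 2 lm \<le> (real n - 2) * sojourn_sum lm 3 n"
    unfolding e by (rule suminf_le_const[OF sm]) (use bound in \<open>simp add: partial_hit2_def\<close>)
qed

text \<open>Partial sums of the probability of ending without ever visiting state 2; such plays
  stay in {3..n} and then jump directly to 1.\<close>
definition partial_avoid2 :: "nat \<Rightarrow> nat \<Rightarrow> real" where
  "partial_avoid2 m J = (\<Sum>t<J. avoid2_prob lm n m t)"

lemma partial_avoid2_Suc:
  "partial_avoid2 m (Suc J) = trans lm m 1 + (\<Sum>k\<in>{3..n}. trans lm m k * partial_avoid2 k J)"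
  unfolding partial_avoid2_def sum.lessThan_Suc_shift avoid2_prob_0 avoid2_prob_Suc[OF two_le_n]
    sum_swap_rounds ..

lemma prob_T2_lt_T1_bounds:
  assumes "3 \<le> n"
  shows "prob_T2_lt_T1 n lm \<le> 1" "1 - (real n - 2) * direct_exit lm n \<le> prob_T2_lt_T1 n lm"
proof -
  have bound: "partial_avoid2 n J \<le> (real n - 2) * direct_exit lm n" for J
    using trans_kernel_bound[of 3 "\<lambda>k. trans lm k 1" partial_avoid2 n J] partial_avoid2_Suc assms
      trans_nonneg[OF lm] by (simp add: partial_avoid2_def direct_exit_def)
  have sm: "summable (avoid2_prob lm n n)"
    by (rule summableI_nonneg_bounded[OF avoid2_prob_nonneg[OF lm]])
       (use bound in \<open>simp add: partial_avoid2_def\<close>)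
  have visit: "(\<Sum>ys\<in>mid_states n t. if hit_time 2 (ys @ [1]) < hit_time 1 (ys @ [1])
        then path_prob lm n (ys @ [1]) else 0) = end_prob lm n n t - avoid2_prob lm n n t" for t
    unfolding end_prob_def avoid2_prob_def sum_subtractf[symmetric]
    by (intro sum.cong refl) (auto simp: mid_states_def hit_time_2_less_1_play[simplified])
  have "prob_T2_lt_T1 n lm = (\<Sum>t. \<Sum>xs\<in>complete_paths n t.
      if hit_time 2 xs < hit_time 1 xs then path_prob lm n xs else 0)"
    unfolding prob_T2_lt_T1_def by (simp add: sum.inter_filter[OF finite_complete_paths])
  also have "\<dots> = 1 - suminf (avoid2_prob lm n n)"
  proof (rule suminf_complete_paths)
    have "end_prob lm n n sums 1" by (rule end_prob_sums) (use two_le_n in simp)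
    then show "(\<lambda>t. \<Sum>ys\<in>mid_states n t. if hit_time 2 (ys @ [1]) < hit_time 1 (ys @ [1])
        then path_prob lm n (ys @ [1]) else 0) sums (1 - suminf (avoid2_prob lm n n))"
      unfolding visit by (rule sums_diff[OF _ summable_sums[OF sm]])
  qed (use two_le_n in simp)
  finally have e: "prob_T2_lt_T1 n lm = 1 - suminf (avoid2_prob lm n n)" .
  show "prob_T2_lt_T1 n lm \<le> 1"
    unfolding e using suminf_nonneg[OF sm avoid2_prob_nonneg[OF lm]] by simp
  show "1 - (real n - 2) * direct_exit lm n \<le> prob_T2_lt_T1 n lm"
    unfolding e using suminf_le_const[OF sm] bound by (simp add: partial_avoid2_def)
qed

end


section \<open>Asymptotics as \<lambda> \<rightarrow> 0+\<close>

lemma eventually_unit_interval: "eventually (\<lambda>x::real. 0 < x \<and> x < 1) (at_right 0)"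
  unfolding eventually_at_right_field by (intro exI[of _ 1]) auto

lemma powr_tendsto_0: "0 < e \<Longrightarrow> ((\<lambda>x::real. x powr e) \<longlongrightarrow> 0) (at_right 0)"
  by (rule tendsto_zero_powrI) (auto intro: eventually_mono[OF eventually_unit_interval])

lemma nobid_prob_tendsto_0: "2 \<le> m \<Longrightarrow> ((\<lambda>x. nobid_prob x m) \<longlongrightarrow> 0) (at_right 0)"
  unfolding nobid_prob_def by (rule powr_tendsto_0) simp

lemma trans_end_le:
  assumes "0 < x" "x < 1" "2 \<le> m"
  shows "trans x m 1 \<le> real m * x / (1 - nobid_prob x m ^ m)"
proof -
  have "real m * (1 - nobid_prob x m) * x \<le> real m * x"
    using nobid_prob_bounds[OF assms] assms by (simp add: mult_le_cancel_left1 mult.assoc)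
  then show ?thesis
    unfolding trans_end[OF assms] using nobid_prob_all[OF assms] by (simp add: divide_right_mono)
qed

lemma trans_end_tendsto_0:
  assumes "2 \<le> m"
  shows "((\<lambda>x. trans x m 1) \<longlongrightarrow> 0) (at_right 0)"
proof (rule tendsto_sandwich[where f = "\<lambda>_. 0" and h = "\<lambda>x. real m * x / (1 - nobid_prob x m ^ m)"])
  show "\<forall>\<^sub>F x in at_right 0. 0 \<le> trans x m 1"
    by (rule eventually_mono[OF eventually_unit_interval]) (auto intro: trans_nonneg)
  show "\<forall>\<^sub>F x in at_right 0. trans x m 1 \<le> real m * x / (1 - nobid_prob x m ^ m)"
    by (rule eventually_mono[OF eventually_unit_interval]) (use trans_end_le assms in auto)
  have "((\<lambda>x. real m * x / (1 - nobid_prob x m ^ m)) \<longlongrightarrow> real m * 0 / (1 - 0 ^ m)) (at_right 0)"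
    by (intro tendsto_intros nobid_prob_tendsto_0 assms) (use assms in \<open>simp add: power_0_left\<close>)
  then show "((\<lambda>x. real m * x / (1 - nobid_prob x m ^ m)) \<longlongrightarrow> 0) (at_right 0)" by simp
qed simp

text \<open>Comparing the O(\<lambda>) one-step ending probability with the \<lambda>^(1/(k-1)) probability of
  leaving a state k \<ge> 3 leaves a factor \<lambda>^(1 - 1/(k-1)).\<close>
lemma end_over_leave_le:
  assumes "0 < x" "x < 1" "2 \<le> m" "3 \<le> k"
  shows "trans x m 1 / (1 - trans x k k) \<le> real m * x powr (1 - 1 / (real k - 1))
    / ((1 - nobid_prob x m ^ m) * real k * (1 - nobid_prob x k) ^ (k - 1))"
proof -
  have k: "2 \<le> k" using assms by simp
  define d where "d = real k * (1 - nobid_prob x k) ^ (k - 1) * nobid_prob x k"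
  have d: "0 < d" "d \<le> 1 - trans x k k"
    unfolding d_def using nobid_prob_bounds[OF assms(1,2) k] trans_leave_lower[OF assms(1,2) k] k
    by auto
  have "trans x m 1 / (1 - trans x k k) \<le> trans x m 1 / d"
    by (rule divide_left_mono) (use d trans_nonneg assms in auto)
  also have "\<dots> \<le> (real m * x / (1 - nobid_prob x m ^ m)) / d"
    by (rule divide_right_mono[OF trans_end_le[OF assms(1-3)]]) (use d in simp)
  also have "\<dots> = real m * (x / nobid_prob x k)
      / ((1 - nobid_prob x m ^ m) * real k * (1 - nobid_prob x k) ^ (k - 1))"
    unfolding d_def by (simp add: field_simps)
  also have "x / nobid_prob x k = x powr (1 - 1 / (real k - 1))"
    unfolding nobid_prob_def powr_diff using assms by simp
  finally show ?thesis .
qed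

lemma end_over_leave_tendsto_0:
  assumes "2 \<le> m" "3 \<le> k"
  shows "((\<lambda>x. trans x m 1 / (1 - trans x k k)) \<longlongrightarrow> 0) (at_right 0)"
proof (rule tendsto_sandwich[where f = "\<lambda>_. 0" and h = "\<lambda>x. real m * x powr (1 - 1 / (real k - 1))
    / ((1 - nobid_prob x m ^ m) * real k * (1 - nobid_prob x k) ^ (k - 1))"])
  show "\<forall>\<^sub>F x in at_right 0. 0 \<le> trans x m 1 / (1 - trans x k k)"
    by (rule eventually_mono[OF eventually_unit_interval])
       (use assms in \<open>auto intro!: divide_nonneg_pos trans_nonneg trans_leave_pos\<close>)
  show "\<forall>\<^sub>F x in at_right 0. trans x m 1 / (1 - trans x k k) \<le> real m * x powr (1 - 1 / (real k - 1))
    / ((1 - nobid_prob x m ^ m) * real k * (1 - nobid_prob x k) ^ (k - 1))"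
    by (rule eventually_mono[OF eventually_unit_interval]) (use end_over_leave_le assms in auto)
  have e: "0 < 1 - 1 / (real k - 1)" using assms by (simp add: field_simps)
  have "((\<lambda>x. real m * x powr (1 - 1 / (real k - 1))
      / ((1 - nobid_prob x m ^ m) * real k * (1 - nobid_prob x k) ^ (k - 1)))
     \<longlongrightarrow> real m * 0 / ((1 - 0 ^ m) * real k * (1 - 0) ^ (k - 1))) (at_right 0)"
    by (intro tendsto_intros nobid_prob_tendsto_0 powr_tendsto_0 e)
       (use assms in \<open>auto simp: power_0_left\<close>)
  then show "((\<lambda>x. real m * x powr (1 - 1 / (real k - 1))
      / ((1 - nobid_prob x m ^ m) * real k * (1 - nobid_prob x k) ^ (k - 1))) \<longlongrightarrow> 0) (at_right 0)"
    by simp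
qed simp

lemma exit_rate_tendsto_0: "((\<lambda>x. exit_rate x n) \<longlongrightarrow> 0) (at_right 0)"
  using tendsto_sum[of "{2..n}" "\<lambda>k x. trans x k 1" "\<lambda>_. 0" "at_right 0"] trans_end_tendsto_0
  by (simp add: exit_rate_def)

lemma exit_rate_sojourn_tendsto_0:
  "((\<lambda>x. exit_rate x n * sojourn_sum x 3 n) \<longlongrightarrow> 0) (at_right 0)"
proof -
  have "((\<lambda>x. \<Sum>i\<in>{2..n}. \<Sum>j\<in>{3..n}. trans x i 1 / (1 - trans x j j))
      \<longlongrightarrow> (\<Sum>i\<in>{2..n}. \<Sum>j\<in>{3..n}. 0)) (at_right 0)"
    by (intro tendsto_sum end_over_leave_tendsto_0) auto
  then show ?thesis by (simp add: exit_rate_def sojourn_sum_def sum_product)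
qed

lemma direct_exit_tendsto_0: "((\<lambda>x. direct_exit x n) \<longlongrightarrow> 0) (at_right 0)"
proof -
  have "((\<lambda>x. \<Sum>j\<in>{3..n}. trans x j 1 / (1 - trans x j j)) \<longlongrightarrow> (\<Sum>j\<in>{3..n}. 0)) (at_right 0)"
    by (intro tendsto_sum end_over_leave_tendsto_0) auto
  then show ?thesis by (simp add: direct_exit_def)
qed

text \<open>Part (I) in terms of \<lambda>: E[T_{n,1}] \<ge> 1 / exit_rate \<rightarrow> \<infinity>.\<close>
lemma expected_T_1_tendsto:
  assumes "2 \<le> n"
  shows "filterlim (\<lambda>x. expected_T n 1 x) at_top (at_right 0)"
proof (rule filterlim_at_top_mono)
  have ev: "\<forall>\<^sub>F x in at_right 0. 0 < exit_rate x n \<and> 1 / exit_rate x n \<le> expected_T n 1 x"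
  proof (rule eventually_mono[OF eventually_unit_interval])
    fix x :: real assume x: "0 < x \<and> x < 1"
    interpret equilibrium x n using x assms by unfold_locales auto
    have "0 < trans x 2 1" by (rule trans_end_pos) (use x in auto)
    also have "\<dots> \<le> exit_rate x n" unfolding exit_rate_def
      by (rule member_le_sum) (use assms x trans_nonneg in auto)
    finally show "0 < exit_rate x n \<and> 1 / exit_rate x n \<le> expected_T n 1 x"
      using expected_T_1_lower by simp
  qed
  then show "\<forall>\<^sub>F x in at_right 0. inverse (exit_rate x n) \<le> expected_T n 1 x"
    by (auto elim: eventually_mono simp: inverse_eq_divide)
  show "LIM x at_right 0. inverse (exit_rate x n) :> at_top"
    by (rule filterlim_inverse_at_top[OF exit_rate_tendsto_0]) (use ev in \<open>auto elim: eventually_mono\<close>)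
qed

lemma prob_T2_lt_T1_tendsto:
  assumes "3 \<le> n"
  shows "((\<lambda>x. prob_T2_lt_T1 n x) \<longlongrightarrow> 1) (at_right 0)"
proof (rule tendsto_sandwich[where f = "\<lambda>x. 1 - (real n - 2) * direct_exit x n" and h = "\<lambda>_. 1"])
  have "\<forall>\<^sub>F x in at_right 0. 1 - (real n - 2) * direct_exit x n \<le> prob_T2_lt_T1 n x
      \<and> prob_T2_lt_T1 n x \<le> 1"
  proof (rule eventually_mono[OF eventually_unit_interval])
    fix x :: real assume x: "0 < x \<and> x < 1"
    interpret equilibrium x n using x assms by unfold_locales auto
    show "1 - (real n - 2) * direct_exit x n \<le> prob_T2_lt_T1 n x \<and> prob_T2_lt_T1 n x \<le> 1"
      using prob_T2_lt_T1_bounds[OF assms] by simp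
  qed
  then show "\<forall>\<^sub>F x in at_right 0. 1 - (real n - 2) * direct_exit x n \<le> prob_T2_lt_T1 n x"
    and "\<forall>\<^sub>F x in at_right 0. prob_T2_lt_T1 n x \<le> 1"
    by (auto elim: eventually_mono)
  have "((\<lambda>x. 1 - (real n - 2) * direct_exit x n) \<longlongrightarrow> 1 - (real n - 2) * 0) (at_right 0)"
    by (intro tendsto_intros direct_exit_tendsto_0)
  then show "((\<lambda>x. 1 - (real n - 2) * direct_exit x n) \<longlongrightarrow> 1) (at_right 0)" by simp
qed simp

text \<open>Part (III) in terms of \<lambda>: the ratio is at most (n-2) sojourn_sum \<times> exit_rate.\<close>
lemma expected_T_ratio_tendsto:
  assumes "3 \<le> n"
  shows "((\<lambda>x. expected_T n 2 x / expected_T n 1 x) \<longlongrightarrow> 0) (at_right 0)"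
proof (rule tendsto_sandwich[where f = "\<lambda>_. 0"
      and h = "\<lambda>x. (real n - 2) * (exit_rate x n * sojourn_sum x 3 n)"])
  have "\<forall>\<^sub>F x in at_right 0. 0 \<le> expected_T n 2 x / expected_T n 1 x \<and>
      expected_T n 2 x / expected_T n 1 x \<le> (real n - 2) * (exit_rate x n * sojourn_sum x 3 n)"
  proof (rule eventually_mono[OF eventually_unit_interval])
    fix x :: real assume x: "0 < x \<and> x < 1"
    interpret equilibrium x n using x assms by unfold_locales auto
    have rate: "0 < exit_rate x n"
      using trans_end_pos[of x 2] trans_nonneg[of x] x assms
      by (auto simp: exit_rate_def intro: sum_pos2[where i = 2])
    have E1: "1 / exit_rate x n \<le> expected_T n 1 x" by (rule expected_T_1_lower)
    have E1_pos: "0 < expected_T n 1 x" using E1 rate by (meson divide_pos_pos less_le_trans zero_less_one)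
    note E2 = expected_T_2_bounds[OF assms]
    have "expected_T n 2 x / expected_T n 1 x \<le> expected_T n 2 x / (1 / exit_rate x n)"
      by (rule divide_left_mono[OF E1 E2(1)]) (use E1_pos rate in auto)
    also have "\<dots> \<le> (real n - 2) * sojourn_sum x 3 n * exit_rate x n"
      using E2(2) rate by (simp add: mult_right_mono)
    finally show "0 \<le> expected_T n 2 x / expected_T n 1 x \<and>
      expected_T n 2 x / expected_T n 1 x \<le> (real n - 2) * (exit_rate x n * sojourn_sum x 3 n)"
      using E1_pos E2(1) by (simp add: ac_simps)
  qed
  then show "\<forall>\<^sub>F x in at_right 0. 0 \<le> expected_T n 2 x / expected_T n 1 x"
    and "\<forall>\<^sub>F x in at_right 0. expected_T n 2 x / expected_T n 1 x
      \<le> (real n - 2) * (exit_rate x n * sojourn_sum x 3 n)"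
    by (auto elim: eventually_mono)
  have "((\<lambda>x. (real n - 2) * (exit_rate x n * sojourn_sum x 3 n)) \<longlongrightarrow> (real n - 2) * 0) (at_right 0)"
    by (intro tendsto_intros exit_rate_sojourn_tendsto_0)
  then show "((\<lambda>x. (real n - 2) * (exit_rate x n * sojourn_sum x 3 n)) \<longlongrightarrow> 0) (at_right 0)"
    by simp
qed simp


section \<open>From (v - s)/c \<rightarrow> \<infinity> to \<lambda> \<rightarrow> 0+\<close>

text \<open>For \<rho> \<le> 0 the utility is convex with u(0) = 0, hence u(c)/u(d) \<le> c/d for 0 < c < d.\<close>
lemma util_ratio_bounds:
  assumes "\<rho> \<le> 0" "0 < c" "c < d"
  shows "0 < util \<rho> c / util \<rho> d \<and> util \<rho> c / util \<rho> d \<le> c / d"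
proof (cases "\<rho> = 0")
  case True
  then show ?thesis using assms by (simp add: util_def)
next
  case False
  define a where "a = - \<rho>"
  have a: "0 < a" using assms False by (simp add: a_def)
  have "util \<rho> x = (exp (a * x) - 1) / a" for x
    using False by (simp add: util_def a_def field_simps)
  then have "util \<rho> c / util \<rho> d = (exp (a * c) - 1) / (exp (a * d) - 1)"
    using a by simp
  moreover have ec: "1 < exp (a * c)" and ed: "1 < exp (a * d)" using a assms by simp_all
  moreover have "exp (a * c) - 1 \<le> c / d * (exp (a * d) - 1)"
  proof -
    define t where "t = c / d"
    have t: "0 \<le> t" "t \<le> 1" and at: "t * (a * d) = a * c" using assms by (auto simp: t_def)
    have "exp ((1 - t) *\<^sub>R 0 + t *\<^sub>R (a * d)) \<le> (1 - t) * exp 0 + t * exp (a * d)"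
      by (rule convex_onD[OF exp_convex t]) auto
    then show ?thesis using at by (simp add: t_def algebra_simps)
  qed
  ultimately show ?thesis by (simp add: divide_le_eq)
qed

lemma lam_tendsto_0:
  assumes "\<rho> \<le> 0"
  shows "filterlim (\<lambda>(v, s, c). lam \<rho> v s c) (at_right 0) ratio_to_infinity"
proof -
  let ?ratio = "\<lambda>(v, s, c). (v - s) / c" and ?lam = "\<lambda>(v, s, c). lam \<rho> v s c"
  have bounds: "\<forall>\<^sub>F x in ratio_to_infinity. 0 < ?lam x \<and> ?lam x \<le> inverse (?ratio x)"
    unfolding ratio_to_infinity_def eventually_inf_principal
    by (auto simp: lam_def dest: util_ratio_bounds[OF assms] intro!: always_eventually)
  have "filterlim ?ratio at_top ratio_to_infinity"
    by (rule filterlim_mono[OF filterlim_filtercomap order_refl]) (simp add: ratio_to_infinity_def)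
  then have "(?lam \<longlongrightarrow> 0) ratio_to_infinity"
    by (intro tendsto_sandwich[OF _ _ tendsto_const tendsto_inverse_0_at_top])
       (use bounds in \<open>auto elim: eventually_mono\<close>)
  then show ?thesis unfolding filterlim_at using bounds by (auto elim: eventually_mono)
qed

lemma filterlim_via_lam:
  assumes "\<rho> \<le> 0" and "filterlim f F (at_right 0)"
  shows "filterlim (\<lambda>(v, s, c). f (lam \<rho> v s c)) F ratio_to_infinity"
proof -
  have "(\<lambda>(v, s, c). f (lam \<rho> v s c)) = (\<lambda>x. f ((\<lambda>(v, s, c). lam \<rho> v s c) x))"
    by (auto simp: fun_eq_iff)
  then show ?thesis using filterlim_compose[OF assms(2) lam_tendsto_0[OF assms(1)]] by simp
qed

theorem theorem4:
  fixes n :: nat and \<rho> :: real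
  assumes "2 \<le> n" and "\<rho> \<le> 0"
  shows "filterlim (\<lambda>(v, s, c). expected_T n 1 (lam \<rho> v s c)) at_top ratio_to_infinity
    \<and> (2 < n \<longrightarrow> ((\<lambda>(v, s, c). prob_T2_lt_T1 n (lam \<rho> v s c)) \<longlongrightarrow> 1) ratio_to_infinity)
    \<and> (2 < n \<longrightarrow> ((\<lambda>(v, s, c). expected_T n 2 (lam \<rho> v s c) / expected_T n 1 (lam \<rho> v s c))
            \<longlongrightarrow> 0) ratio_to_infinity)"
proof (intro conjI impI)
  show "filterlim (\<lambda>(v, s, c). expected_T n 1 (lam \<rho> v s c)) at_top ratio_to_infinity"
    by (rule filterlim_via_lam[OF assms(2) expected_T_1_tendsto[OF assms(1)]])
next
  assume "2 < n"
  then have n: "3 \<le> n" by simp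
  show "((\<lambda>(v, s, c). prob_T2_lt_T1 n (lam \<rho> v s c)) \<longlongrightarrow> 1) ratio_to_infinity"
    by (rule filterlim_via_lam[OF assms(2) prob_T2_lt_T1_tendsto[OF n]])
next
  assume "2 < n"
  then have n: "3 \<le> n" by simp
  show "((\<lambda>(v, s, c). expected_T n 2 (lam \<rho> v s c) / expected_T n 1 (lam \<rho> v s c)) \<longlongrightarrow> 0)
      ratio_to_infinity"
    using filterlim_via_lam[OF assms(2) expected_T_ratio_tendsto[OF n]] by simp
qed

end
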